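(* Let $\mathcal O\subset\Xi$ be measurable with $\nu(\mathcal O)=+\infty$ and $\psi:\mathcal O\to(0,\infty)$ measurable. Assume there exists $\alpha\in(0,1)$ such that the limit $$r_1=\lim_{\lambda\to+\infty}\frac{1}{\lambda^\alpha}\int_{\mathcal O}\big(e^{-\lambda\psi(u)}-1\big)\,\nu(du)$$ exists and belongs to $(-\infty,0)$. Then for every $t>0$, $$\Big(\int_0^t\int_{\mathcal O}\psi(u)\,N(ds,du)\Big)^{-1}\in\bigcap_{p\ge1}L^p(\mathbb P).$$
   Context: $(\Xi,\mathcal X,\nu)$ is a measure space with $\nu$ $\sigma$-finite, and $N$ is a Poisson random measure on $[0,\infty)\times\Xi$ with intensity $dt\times\nu$ defined on a probability space $(\Omega,\mathcal A,\mathbb P)$. *)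

theory Defs
  imports "HOL-Probability.Probability"
begin

definition time_space_intensity :: "'x measure \<Rightarrow> (real \<times> 'x) measure" where
  "time_space_intensity \<nu> = restrict_space lborel {0..} \<Otimes>\<^sub>M \<nu>"

definition poisson_random_measure ::
  "'w measure \<Rightarrow> 'e measure \<Rightarrow> ('w \<Rightarrow> 'e measure) \<Rightarrow> bool" where
  "poisson_random_measure P \<mu> N \<longleftrightarrow>
     prob_space P \<and>
     (\<forall>\<omega>\<in>space P. sets (N \<omega>) = sets \<mu>) \<and>
     (\<forall>A\<in>sets \<mu>. (\<lambda>\<omega>. emeasure (N \<omega>) A) \<in> borel_measurable P) \<and>
     (\<forall>A\<in>sets \<mu>. emeasure \<mu> A < \<infinity> \<longrightarrow>
        (\<forall>k::nat. \<P>(\<omega> in P. emeasure (N \<omega>) A = of_nat k)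
            = exp (- enn2real (emeasure \<mu> A)) * enn2real (emeasure \<mu> A) ^ k / fact k)) \<and>
     (\<forall>A\<in>sets \<mu>. emeasure \<mu> A = \<infinity> \<longrightarrow> (AE \<omega> in P. emeasure (N \<omega>) A = \<infinity>)) \<and>
     (\<forall>(I::nat set) A. finite I \<longrightarrow> A ` I \<subseteq> sets \<mu> \<longrightarrow> disjoint_family_on A I \<longrightarrow>
        prob_space.indep_vars P (\<lambda>_. borel) (\<lambda>i \<omega>. emeasure (N \<omega>) (A i)) I)"

end

theory Submission
  imports Defs "HOL-Real_Asymp.Real_Asymp"
begin

text \<open>Let \<open>X\<close> be the integral. Since \<open>X \<ge> N([0,t] \<times> {\<psi> \<ge> 1/l}) / l\<close>, the event
  \<open>X < 1/l\<close> forces \<open>N\<close> to have no point in that set, which has probability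
  \<open>exp (-t \<nu>{\<psi> \<ge> 1/l})\<close>. Integrating the pointwise bound
  \<open>1 - exp (-\<eta> l x) \<le> [x \<ge> 1/l] + 2 \<eta> (1 - exp (-l x))\<close> against \<open>\<nu>\<close> and inserting the
  Laplace asymptotics at \<open>l\<close> and \<open>\<eta> l\<close> for a small fixed \<open>\<eta>\<close> gives
  \<open>\<nu>{\<psi> \<ge> 1/l} \<ge> c l powr \<alpha>\<close>. So \<open>1/X\<close> has stretched-exponential tails
  \<open>exp (-c' y powr \<alpha>)\<close> and hence all moments. Finally \<open>X > 0\<close> almost surely because
  \<open>[0,t] \<times> \<O>\<close> has infinite intensity, so \<open>N\<close> charges it.\<close>

lemma measurable_nn_integral_random_measure:
  assumes sets_eq: "\<And>\<omega>. \<omega> \<in> space P \<Longrightarrow> sets (N \<omega>) = sets M"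
    and emeasure_measurable: "\<And>A. A \<in> sets M \<Longrightarrow> (\<lambda>\<omega>. emeasure (N \<omega>) A) \<in> borel_measurable P"
    and f: "f \<in> borel_measurable M"
  shows "(\<lambda>\<omega>. \<integral>\<^sup>+ z. f z \<partial>N \<omega>) \<in> borel_measurable P"
proof -
  have measurable_N: "g \<in> borel_measurable (N \<omega>)"
    if "\<omega> \<in> space P" "g \<in> borel_measurable M" for g :: "_ \<Rightarrow> ennreal" and \<omega>
    using measurable_cong_sets[OF sets_eq[OF that(1)] refl, of borel] that(2) by blast
  show ?thesis using f
  proof (induct rule: borel_measurable_induct)
    case (cong f g)
    have "\<omega> \<in> space P \<Longrightarrow> (\<integral>\<^sup>+ z. f z \<partial>N \<omega>) = (\<integral>\<^sup>+ z. g z \<partial>N \<omega>)" for \<omega>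
      using cong(3) sets_eq_imp_space_eq[OF sets_eq] by (intro nn_integral_cong) simp
    then show ?case using cong(4) by (simp cong: measurable_cong)
  next
    case (set A)
    have "\<omega> \<in> space P \<Longrightarrow> (\<integral>\<^sup>+ z. indicator A z \<partial>N \<omega>) = emeasure (N \<omega>) A" for \<omega>
      using set sets_eq by (intro nn_integral_indicator) auto
    then show ?case using emeasure_measurable[OF set] by (simp cong: measurable_cong)
  next
    case (mult u c)
    have "\<omega> \<in> space P \<Longrightarrow> (\<integral>\<^sup>+ z. c * u z \<partial>N \<omega>) = c * (\<integral>\<^sup>+ z. u z \<partial>N \<omega>)" for \<omega>
      using mult by (intro nn_integral_cmult) (auto intro: measurable_N)
    then show ?case using mult(4) by (simp cong: measurable_cong)
  next
    case (add u v)
    have "\<omega> \<in> space P \<Longrightarrow>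
        (\<integral>\<^sup>+ z. v z + u z \<partial>N \<omega>) = (\<integral>\<^sup>+ z. v z \<partial>N \<omega>) + (\<integral>\<^sup>+ z. u z \<partial>N \<omega>)" for \<omega>
      using add by (intro nn_integral_add) (auto intro: measurable_N)
    then show ?case using add(3,7) by (simp cong: measurable_cong)
  next
    case (seq U)
    have "\<omega> \<in> space P \<Longrightarrow> (\<integral>\<^sup>+ z. (SUP i. U i) z \<partial>N \<omega>) = (SUP i. \<integral>\<^sup>+ z. U i z \<partial>N \<omega>)" for \<omega>
      using seq unfolding SUP_apply
      by (intro nn_integral_monotone_convergence_SUP) (auto intro: measurable_N)
    then show ?case using seq(3) by (simp cong: measurable_cong)
  qed
qed

lemma sets_restrict_lborel_atLeastAtMost:
  "{0..t} \<in> sets (restrict_space lborel {0::real..})"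
  by (subst sets_restrict_space) (rule image_eqI[where x="{0..t}"], auto)

lemma sets_time_space_intensity_Times:
  "S \<in> sets \<nu> \<Longrightarrow> {0..t} \<times> S \<in> sets (time_space_intensity \<nu>)"
  unfolding time_space_intensity_def using sets_restrict_lborel_atLeastAtMost by (intro pair_measureI)

lemma emeasure_time_space_intensity_Times:
  assumes \<nu>: "sigma_finite_measure \<nu>" and t: "0 \<le> t" and S: "S \<in> sets \<nu>"
  shows "emeasure (time_space_intensity \<nu>) ({0..t} \<times> S) = ennreal t * emeasure \<nu> S"
proof -
  have "emeasure (restrict_space lborel {0::real..}) {0..t} = ennreal t"
    using t by (subst emeasure_restrict_space) auto
  then show ?thesis unfolding time_space_intensity_def
    using sigma_finite_measure.emeasure_pair_measure_Times[OF \<nu> sets_restrict_lborel_atLeastAtMost S]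
    by simp
qed

lemma borel_measurable_time_space_integrand:
  fixes \<psi> :: "'x \<Rightarrow> real"
  assumes Oc: "Oc \<in> sets \<nu>" and \<psi>: "\<psi> \<in> borel_measurable (restrict_space \<nu> Oc)"
  shows "(\<lambda>z. indicator ({0..t} \<times> Oc) z * ennreal (\<psi> (snd z))) \<in> borel_measurable (time_space_intensity \<nu>)"
proof -
  have "(\<lambda>u. ennreal (\<psi> u)) \<in> borel_measurable (restrict_space \<nu> Oc)" using \<psi> by measurable
  then have \<psi>': "(\<lambda>u. ennreal (\<psi> u) * indicator Oc u) \<in> borel_measurable \<nu>"
    using Oc by (subst borel_measurable_restrict_space_iff_ennreal[symmetric]) auto
  have "(\<lambda>z. indicator {0..t} (fst z) * (ennreal (\<psi> (snd z)) * indicator Oc (snd z)))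
      \<in> borel_measurable (time_space_intensity \<nu>)"
    unfolding time_space_intensity_def using sets_restrict_lborel_atLeastAtMost
    by (intro borel_measurable_times_ennreal measurable_compose[OF measurable_snd \<psi>']
        measurable_compose[OF measurable_fst borel_measurable_indicator])
  moreover have "indicator ({0..t} \<times> Oc) z * ennreal (\<psi> (snd z))
      = indicator {0..t} (fst z) * (ennreal (\<psi> (snd z)) * indicator Oc (snd z))" for z
    by (cases z) (auto simp: indicator_def)
  ultimately show ?thesis by simp
qed

lemma exp_neg_le_one_minus_half:
  assumes "0 \<le> (y::real)" "y \<le> 1"
  shows "exp (-y) \<le> 1 - y/2"
proof -
  have "exp (-y) = 1 / exp y" by (simp add: exp_minus field_simps)
  also have "\<dots> \<le> 1 / (1 + y)"
    using exp_ge_add_one_self[of y] assms by (intro divide_left_mono) auto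
  also have "\<dots> \<le> 1 - y/2"
  proof -
    have "y*y \<le> y*1" using assms by (intro mult_left_mono) auto
    then have "1 \<le> (1 - y/2)*(1+y)" by (simp add: algebra_simps)
    then show ?thesis using assms by (simp add: pos_divide_le_eq)
  qed
  finally show ?thesis .
qed

lemma one_minus_exp_le_level_indicator:
  fixes x l \<eta> :: real
  assumes "0 \<le> x" "0 < l" "0 < \<eta>" "\<eta> \<le> 1"
  shows "1 - exp (-(\<eta>*l)*x) \<le> (if 1/l \<le> x then 1 else 0) + 2*\<eta>*(1 - exp (-l*x))"
proof (cases "1/l \<le> x")
  case True
  have "exp (-l*x) \<le> 1" using assms by simp
  then show ?thesis using True assms by (simp add: add_increasing2)
next
  case False
  then have y: "0 \<le> l*x" "l*x \<le> 1" using assms by (auto simp: field_simps)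
  have "1 - exp (-(\<eta>*l)*x) \<le> \<eta>*(l*x)" using exp_ge_add_one_self[of "-(\<eta>*l)*x"] by simp
  also have "\<dots> = 2*\<eta>*((l*x)/2)" by simp
  also have "\<dots> \<le> 2*\<eta>*(1 - exp (-(l*x)))"
    using exp_neg_le_one_minus_half[OF y] assms by (intro mult_left_mono) auto
  finally show ?thesis using False by simp
qed

lemma sets_restrict_level_set:
  fixes \<psi> :: "'a \<Rightarrow> real"
  assumes Oc: "Oc \<in> sets \<nu>" and \<psi>: "\<psi> \<in> borel_measurable (restrict_space \<nu> Oc)"
  shows "{u\<in>Oc. c \<le> \<psi> u} \<in> sets \<nu>"
proof -
  have "space (restrict_space \<nu> Oc) = Oc"
    using Oc sets.sets_into_space by (auto simp: space_restrict_space)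
  then have "{u\<in>Oc. c \<le> \<psi> u} \<in> sets (restrict_space \<nu> Oc)"
    using measurable_sets[OF \<psi>, of "{c..}"] by (simp add: vimage_def Int_def conj_commute)
  then show ?thesis using Oc by (simp add: sets_restrict_space_iff)
qed

lemma level_set_measure_ge_Laplace:
  fixes \<psi> :: "'a \<Rightarrow> real"
  assumes Oc: "Oc \<in> sets \<nu>" and \<psi>: "\<psi> \<in> borel_measurable (restrict_space \<nu> Oc)"
    and \<psi>_nonneg: "\<forall>u\<in>Oc. 0 \<le> \<psi> u"
    and l: "0 < l" and \<eta>: "0 < \<eta>" "\<eta> \<le> 1"
    and int_\<eta>l: "set_integrable \<nu> Oc (\<lambda>u. exp (-(\<eta>*l) * \<psi> u) - 1)"
    and int_l: "set_integrable \<nu> Oc (\<lambda>u. exp (- l * \<psi> u) - 1)"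
  shows "ennreal (2*\<eta>*(LINT u:Oc|\<nu>. exp (- l * \<psi> u) - 1) - (LINT u:Oc|\<nu>. exp (-(\<eta>*l) * \<psi> u) - 1))
    \<le> emeasure \<nu> {u\<in>Oc. 1/l \<le> \<psi> u}" (is "ennreal ?lhs \<le> emeasure \<nu> ?S")
proof (cases "emeasure \<nu> ?S = \<infinity>")
  case False
  then have S_fin: "emeasure \<nu> ?S < \<infinity>" by (simp add: top.not_eq_extremum)
  have S: "?S \<in> sets \<nu>" using Oc \<psi> by (rule sets_restrict_level_set)
  define h where "h k u = indicator Oc u *\<^sub>R (exp (- k * \<psi> u) - 1)" for k u
  have int_h: "integrable \<nu> (h (\<eta>*l))" "integrable \<nu> (h l)"
    using int_\<eta>l int_l unfolding set_integrable_def h_def by simp_all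
  have int_S: "integrable \<nu> (indicator ?S :: 'a \<Rightarrow> real)"
    using S S_fin by (rule integrable_real_indicator)
  have "- h (\<eta>*l) u \<le> indicator ?S u + 2*\<eta>*(- h l u)" for u
    using one_minus_exp_le_level_indicator[of "\<psi> u" l \<eta>] \<psi>_nonneg l \<eta>
    by (cases "u \<in> Oc") (auto simp: h_def indicator_def)
  then have "integral\<^sup>L \<nu> (\<lambda>u. - h (\<eta>*l) u) \<le> integral\<^sup>L \<nu> (\<lambda>u. indicator ?S u + 2*\<eta>*(- h l u))"
    using int_h int_S by (intro integral_mono) auto
  also have "\<dots> = measure \<nu> ?S - 2*\<eta>*integral\<^sup>L \<nu> (h l)"
    using int_h int_S S S_fin by simp
  finally have "?lhs \<le> measure \<nu> ?S"
    by (simp add: set_lebesgue_integral_def h_def[abs_def])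
  then show ?thesis using S_fin by (simp add: emeasure_eq_ennreal_measure ennreal_leI)
qed simp

lemma level_set_measure_ge_powr:
  fixes \<psi> :: "'a \<Rightarrow> real"
  assumes Oc: "Oc \<in> sets \<nu>" and \<psi>: "\<psi> \<in> borel_measurable (restrict_space \<nu> Oc)"
    and \<psi>_nonneg: "\<forall>u\<in>Oc. 0 \<le> \<psi> u"
    and \<alpha>: "0 < \<alpha>" "\<alpha> < 1" and r1: "r1 < 0"
    and int: "\<forall>\<^sub>F l in at_top. set_integrable \<nu> Oc (\<lambda>u. exp (- l * \<psi> u) - 1)"
    and lim: "((\<lambda>l. (LINT u:Oc|\<nu>. exp (- l * \<psi> u) - 1) / l powr \<alpha>) \<longlongrightarrow> r1) at_top"
  shows "\<exists>c>0. \<exists>L0>0. \<forall>l\<ge>L0. ennreal (c * l powr \<alpha>) \<le> emeasure \<nu> {u\<in>Oc. 1/l \<le> \<psi> u}"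
proof -
  txt \<open>With \<open>\<eta> powr (1-\<alpha>) = 1/10\<close> the term \<open>2\<eta> g l \<approx> r1 \<eta> powr \<alpha> l powr \<alpha> / 4\<close> is
    dominated by \<open>g (\<eta> l) \<approx> r1 \<eta> powr \<alpha> l powr \<alpha>\<close>.\<close>
  define \<eta> where "\<eta> = (1/10::real) powr (1/(1-\<alpha>))"
  have \<eta>: "0 < \<eta>" "\<eta> \<le> 1" unfolding \<eta>_def using \<alpha> by (auto intro: powr_le1)
  have \<eta>_powr: "\<eta> powr (1-\<alpha>) = 1/10" unfolding \<eta>_def using \<alpha> by (simp add: powr_powr)
  define g where "g l = (LINT u:Oc|\<nu>. exp (- l * \<psi> u) - 1)" for l
  obtain N1 where N1: "\<And>l. N1 \<le> l \<Longrightarrow> g l / l powr \<alpha> < 3/4*r1"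
    using order_tendstoD(2)[OF lim, of "3/4*r1"] r1 by (auto simp: g_def eventually_at_top_linorder)
  obtain N2 where N2: "\<And>l. N2 \<le> l \<Longrightarrow> 5/4*r1 < g l / l powr \<alpha>"
    using order_tendstoD(1)[OF lim, of "5/4*r1"] r1 by (auto simp: g_def eventually_at_top_linorder)
  obtain N3 where N3: "\<And>l. N3 \<le> l \<Longrightarrow> set_integrable \<nu> Oc (\<lambda>u. exp (- l * \<psi> u) - 1)"
    using int by (auto simp: eventually_at_top_linorder)
  define c where "c = - r1/2 * \<eta> powr \<alpha>"
  define L0 where "L0 = max 1 (max (N1/\<eta>) (max N2 (max N3 (N3/\<eta>))))"
  have "ennreal (c * l powr \<alpha>) \<le> emeasure \<nu> {u\<in>Oc. 1/l \<le> \<psi> u}" if l: "L0 \<le> l" for l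
  proof -
    have l0: "0 < l" and "N1 \<le> \<eta>*l" "N2 \<le> l" "N3 \<le> l" "N3 \<le> \<eta>*l"
      using l \<eta> by (auto simp: L0_def pos_divide_le_eq mult.commute)
    have bound_\<eta>l: "g (\<eta>*l) < 3/4*r1 * \<eta> powr \<alpha> * l powr \<alpha>"
      using N1[OF \<open>N1 \<le> \<eta>*l\<close>] \<eta> l0 by (simp add: powr_mult pos_divide_less_eq mult.assoc)
    have bound_l: "5/4*r1 * l powr \<alpha> < g l"
      using N2[OF \<open>N2 \<le> l\<close>] l0 by (simp add: pos_less_divide_eq)
    have "2*\<eta> = \<eta> powr \<alpha> / 5"
      using \<eta>_powr \<eta> by (simp add: powr_diff field_simps)
    then have "1/4*r1 * \<eta> powr \<alpha> * l powr \<alpha> = 2*\<eta>*(5/4*r1 * l powr \<alpha>)" by simp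
    also have "\<dots> < 2*\<eta>*g l" using bound_l \<eta> by (intro mult_strict_left_mono) auto
    finally have "1/4*r1 * \<eta> powr \<alpha> * l powr \<alpha> < 2*\<eta>*g l" .
    then have "ennreal (c * l powr \<alpha>) \<le> ennreal (2*\<eta>*g l - g (\<eta>*l))"
      using bound_\<eta>l by (intro ennreal_leI) (simp add: c_def)
    also have "ennreal (2*\<eta>*g l - g (\<eta>*l)) \<le> emeasure \<nu> {u\<in>Oc. 1/l \<le> \<psi> u}"
      unfolding g_def using \<eta> l0 N3 \<open>N3 \<le> l\<close> \<open>N3 \<le> \<eta>*l\<close>
      by (intro level_set_measure_ge_Laplace[OF Oc \<psi> \<psi>_nonneg]) auto
    finally show ?thesis .
  qed
  moreover have "0 < c" "0 < L0" using r1 \<eta> by (simp_all add: c_def L0_def mult_neg_pos)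
  ultimately show ?thesis by blast
qed

lemma poisson_random_measure_AE_nat_valued:
  assumes PRM: "poisson_random_measure P \<mu> N" and A: "A \<in> sets \<mu>"
    and fin: "emeasure \<mu> A < \<infinity>"
  shows "AE \<omega> in P. \<exists>k::nat. emeasure (N \<omega>) A = of_nat k"
proof -
  interpret prob_space P using PRM by (simp add: poisson_random_measure_def)
  define lam where "lam = enn2real (emeasure \<mu> A)"
  define E where "E k = {\<omega>\<in>space P. emeasure (N \<omega>) A = of_nat k}" for k :: nat
  have "(\<lambda>\<omega>. emeasure (N \<omega>) A) \<in> borel_measurable P"
    using PRM A by (simp add: poisson_random_measure_def)
  then have E: "E k \<in> sets P" for k unfolding E_def by measurable
  have prob_E: "prob (E k) = exp (- lam) * lam ^ k / fact k" for k
    using PRM A fin unfolding poisson_random_measure_def E_def lam_def by auto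
  have "(\<lambda>k. prob (E k)) sums prob (\<Union>k. E k)"
    using E by (intro finite_measure_UNION) (auto simp: disjoint_family_on_def E_def)
  moreover have "(\<lambda>k. exp (- lam) * (lam ^ k /\<^sub>R fact k)) sums (exp (- lam) * exp lam)"
    by (intro sums_mult exp_converges)
  then have "(\<lambda>k. prob (E k)) sums 1" by (simp add: prob_E exp_minus field_simps)
  ultimately have "prob (\<Union>k. E k) = 1" using sums_unique2 by blast
  then show ?thesis by (rule AE_prob_1[THEN AE_mp]) (auto simp: E_def)
qed

lemma poisson_random_measure_prob_void_le:
  assumes PRM: "poisson_random_measure P \<mu> N" and A: "A \<in> sets \<mu>"
    and c: "ennreal c \<le> emeasure \<mu> A"
  shows "measure P {\<omega>\<in>space P. emeasure (N \<omega>) A < 1} \<le> exp (- c)"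
proof -
  interpret prob_space P using PRM by (simp add: poisson_random_measure_def)
  define Z where "Z = {\<omega>\<in>space P. emeasure (N \<omega>) A < 1}"
  define Z0 where "Z0 = {\<omega>\<in>space P. emeasure (N \<omega>) A = 0}"
  have "(\<lambda>\<omega>. emeasure (N \<omega>) A) \<in> borel_measurable P"
    using PRM A by (simp add: poisson_random_measure_def)
  then have Z: "Z \<in> sets P" "Z0 \<in> sets P" unfolding Z_def Z0_def by measurable
  show ?thesis
  proof (cases "emeasure \<mu> A = \<infinity>")
    case True
    then have "AE \<omega> in P. emeasure (N \<omega>) A = \<infinity>"
      using PRM A by (simp add: poisson_random_measure_def)
    then have "prob Z = prob {}"
      using Z by (intro measure_eq_AE) (auto simp: Z_def)
    then show ?thesis by (simp add: Z_def)
  next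
    case False
    then have fin: "emeasure \<mu> A < \<infinity>" by (simp add: top.not_eq_extremum)
    define lam where "lam = enn2real (emeasure \<mu> A)"
    have "emeasure \<mu> A = ennreal lam" "0 \<le> lam"
      using fin by (simp_all add: lam_def ennreal_enn2real_if)
    then have exp_lam: "exp (- lam) \<le> exp (- c)"
      using c by (cases "0 \<le> c") auto
    have "AE \<omega> in P. \<omega> \<in> Z \<longleftrightarrow> \<omega> \<in> Z0"
      using poisson_random_measure_AE_nat_valued[OF PRM A fin]
      by (rule AE_mp) (auto simp: Z_def Z0_def)
    then have "prob Z = prob Z0" using Z by (intro measure_eq_AE) auto
    also have "\<dots> = exp (- lam)"
      using PRM A fin unfolding poisson_random_measure_def Z0_def lam_def
      by (auto dest!: bspec[of _ _ A] spec[of _ 0])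
    also note exp_lam
    finally show ?thesis by (simp add: Z_def)
  qed
qed

lemma poisson_random_measure_prob_nn_integral_less_le:
  assumes PRM: "poisson_random_measure P \<mu> N" and B: "B \<in> sets \<mu>"
    and f_ge: "\<forall>z\<in>B. a \<le> f z" and c: "ennreal c \<le> emeasure \<mu> B"
  shows "measure P {\<omega>\<in>space P. (\<integral>\<^sup>+ z. f z \<partial>N \<omega>) < a} \<le> exp (- c)"
proof -
  interpret prob_space P using PRM by (simp add: poisson_random_measure_def)
  have "emeasure (N \<omega>) B < 1" if \<omega>: "\<omega> \<in> space P" and less: "(\<integral>\<^sup>+ z. f z \<partial>N \<omega>) < a" for \<omega>
  proof (rule ccontr)
    assume "\<not> emeasure (N \<omega>) B < 1"
    then have "a * 1 \<le> a * emeasure (N \<omega>) B" by (intro mult_left_mono) auto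
    also have "\<dots> = (\<integral>\<^sup>+ z. a * indicator B z \<partial>N \<omega>)"
      using B PRM \<omega> by (simp add: nn_integral_cmult_indicator poisson_random_measure_def)
    also have "\<dots> \<le> (\<integral>\<^sup>+ z. f z \<partial>N \<omega>)"
      using f_ge by (intro nn_integral_mono) (auto simp: indicator_def)
    finally show False using less by simp
  qed
  moreover have "(\<lambda>\<omega>. emeasure (N \<omega>) B) \<in> borel_measurable P"
    using PRM B by (simp add: poisson_random_measure_def)
  ultimately have "prob {\<omega>\<in>space P. (\<integral>\<^sup>+ z. f z \<partial>N \<omega>) < a}
      \<le> prob {\<omega>\<in>space P. emeasure (N \<omega>) B < 1}"
    by (intro finite_measure_mono) auto
  also have "\<dots> \<le> exp (- c)" by (rule poisson_random_measure_prob_void_le[OF PRM B c])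
  finally show ?thesis .
qed

lemma poisson_random_measure_AE_nn_integral_nonzero:
  assumes PRM: "poisson_random_measure P \<mu> N" and f: "f \<in> borel_measurable \<mu>"
    and B: "B \<in> sets \<mu>" and B_inf: "emeasure \<mu> B = \<infinity>" and f_nonzero: "\<forall>z\<in>B. f z \<noteq> 0"
  shows "AE \<omega> in P. (\<integral>\<^sup>+ z. f z \<partial>N \<omega>) \<noteq> 0"
proof -
  have "AE \<omega> in P. emeasure (N \<omega>) B = \<infinity>"
    using PRM B B_inf by (simp add: poisson_random_measure_def)
  moreover have "(\<integral>\<^sup>+ z. f z \<partial>N \<omega>) \<noteq> 0"
    if \<omega>: "\<omega> \<in> space P" and inf: "emeasure (N \<omega>) B = \<infinity>" for \<omega>
  proof
    assume zero: "(\<integral>\<^sup>+ z. f z \<partial>N \<omega>) = 0"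
    have sets_N: "sets (N \<omega>) = sets \<mu>" using PRM \<omega> by (simp add: poisson_random_measure_def)
    have "f \<in> borel_measurable (N \<omega>)"
      using measurable_cong_sets[OF sets_N refl, of borel] f by blast
    then have "AE z in N \<omega>. f z = 0" using zero by (simp add: nn_integral_0_iff_AE)
    then have "AE z in N \<omega>. z \<notin> B" using f_nonzero by auto
    then have "emeasure (N \<omega>) B = 0"
      using B sets_N by (simp add: AE_iff_null_sets null_setsD1)
    then show False using inf by simp
  qed
  ultimately show ?thesis by auto
qed

lemma summable_powr_mult_exp_neg_powr:
  fixes c \<alpha> p :: real
  assumes "0 < c" "0 < \<alpha>"
  shows "summable (\<lambda>n::nat. (real n + 1) powr p * exp (- c * real n powr \<alpha>))"
proof -
  have "((\<lambda>n::nat. (real n + 1) powr p * exp (- c * real n powr \<alpha>) * (real n)^2) \<longlongrightarrow> 0) at_top"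
    using assms by real_asymp
  then have "\<forall>\<^sub>F n in sequentially. (real n + 1) powr p * exp (- c * real n powr \<alpha>) * (real n)^2 < 1"
    by (rule order_tendstoD(2)) simp
  then have "\<forall>\<^sub>F n in sequentially.
      norm ((real n + 1) powr p * exp (- c * real n powr \<alpha>)) \<le> inverse (real n ^ 2)"
    using eventually_ge_at_top[of "1::nat"]
    by eventually_elim (simp add: field_simps)
  then show ?thesis
    by (rule summable_comparison_test_ev) (rule inverse_power_summable, simp)
qed

lemma (in prob_space) integrable_powr_of_stretched_exp_tail:
  fixes Y :: "'a \<Rightarrow> real"
  assumes Y: "Y \<in> borel_measurable M" and Y_nonneg: "\<forall>\<omega>\<in>space M. 0 \<le> Y \<omega>"
    and c: "0 < c" and \<alpha>: "0 < \<alpha>" and p: "0 \<le> p"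
    and tail: "\<forall>y\<ge>y0. prob {\<omega>\<in>space M. y \<le> Y \<omega>} \<le> exp (- c * y powr \<alpha>)"
  shows "integrable M (\<lambda>\<omega>. Y \<omega> powr p)"
proof -
  define E where "E n = {\<omega>\<in>space M. real n \<le> Y \<omega>}" for n :: nat
  have E: "E n \<in> sets M" for n unfolding E_def using Y by measurable
  define a where "a n = (real n + 1) powr p * prob (E n)" for n
  have "\<forall>\<^sub>F n in sequentially. norm (a n) \<le> (real n + 1) powr p * exp (- c * real n powr \<alpha>)"
  proof -
    have "\<forall>\<^sub>F n in sequentially. y0 \<le> real n" by real_asymp
    then show ?thesis
      by eventually_elim (use tail in \<open>simp add: a_def E_def mult_left_mono\<close>)
  qed
  then have "summable a"
    using summable_powr_mult_exp_neg_powr[OF c \<alpha>] by (rule summable_comparison_test_ev)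
  have Y_le_sum: "ennreal (norm (Y \<omega> powr p))
      \<le> (\<Sum>n. ennreal ((real n + 1) powr p) * indicator (E n) \<omega>)" if \<omega>: "\<omega> \<in> space M" for \<omega>
  proof -
    define m where "m = nat \<lfloor>Y \<omega>\<rfloor>"
    have m: "real m \<le> Y \<omega>" "Y \<omega> \<le> real m + 1"
      using Y_nonneg \<omega> floor_correct[of "Y \<omega>"] unfolding m_def by auto
    then have "Y \<omega> powr p \<le> (real m + 1) powr p" using Y_nonneg \<omega> p by (intro powr_mono2) auto
    then have "ennreal (norm (Y \<omega> powr p)) \<le> ennreal ((real m + 1) powr p) * indicator (E m) \<omega>"
      using \<omega> m by (simp add: E_def ennreal_leI)
    also have "\<dots> \<le> (\<Sum>n. ennreal ((real n + 1) powr p) * indicator (E n) \<omega>)"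
      by (metis ennreal_suminf_lessD less_irrefl not_le)
    finally show ?thesis .
  qed
  have "(\<integral>\<^sup>+ \<omega>. ennreal (norm (Y \<omega> powr p)) \<partial>M)
      \<le> (\<integral>\<^sup>+ \<omega>. (\<Sum>n. ennreal ((real n + 1) powr p) * indicator (E n) \<omega>) \<partial>M)"
    using Y_le_sum by (intro nn_integral_mono) auto
  also have "\<dots> = (\<Sum>n. ennreal (a n))"
    using E by (simp add: nn_integral_suminf nn_integral_cmult_indicator emeasure_eq_measure a_def ennreal_mult)
  also have "\<dots> = ennreal (suminf a)"
    using \<open>summable a\<close> by (intro suminf_ennreal2) (simp_all add: a_def[abs_def])
  also have "\<dots> < \<infinity>" by simp
  finally show ?thesis using Y by (intro integrableI_bounded) auto
qed

lemma (in prob_space) integrable_inverse_powr_of_lower_tail: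
  fixes X :: "'a \<Rightarrow> ennreal"
  assumes X: "X \<in> borel_measurable M" and c: "0 < c" and \<alpha>: "0 < \<alpha>" and p: "0 \<le> p"
    and tail: "\<forall>l\<ge>L0. prob {\<omega>\<in>space M. X \<omega> < ennreal (1/l)} \<le> exp (- c * l powr \<alpha>)"
    and L0: "0 < L0"
  shows "integrable M (\<lambda>\<omega>. enn2real (inverse (X \<omega>)) powr p)"
proof (rule integrable_powr_of_stretched_exp_tail)
  show "(\<lambda>\<omega>. enn2real (inverse (X \<omega>))) \<in> borel_measurable M" using X by measurable
  show "0 < c / 2 powr \<alpha>" using c by simp
  show "\<forall>y\<ge>2*L0. prob {\<omega>\<in>space M. y \<le> enn2real (inverse (X \<omega>))} \<le> exp (- (c / 2 powr \<alpha>) * y powr \<alpha>)"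
  proof (intro allI impI)
    fix y assume y: "2*L0 \<le> y"
    then have y0: "0 < y" using L0 by simp
    have "X \<omega> < ennreal (1/(y/2))" if "y \<le> enn2real (inverse (X \<omega>))" for \<omega>
    proof (cases "X \<omega>" rule: ennreal_cases)
      case (real x)
      txt \<open>\<open>x = 0\<close> is excluded since \<open>enn2real (inverse 0) = enn2real \<infinity> = 0\<close>.\<close>
      with that y0 have "0 < x" by (cases "x = 0") auto
      with real that have "y \<le> 1/x" by (simp add: inverse_ennreal divide_inverse)
      with \<open>0 < x\<close> y0 have "x < 1/(y/2)" by (simp add: field_simps)
      with real y0 show ?thesis by (simp add: ennreal_lessI)
    qed (use that y0 in simp)
    then have "prob {\<omega>\<in>space M. y \<le> enn2real (inverse (X \<omega>))}
        \<le> prob {\<omega>\<in>space M. X \<omega> < ennreal (1/(y/2))}"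
      using X by (intro finite_measure_mono) auto
    also have "\<dots> \<le> exp (- c * (y/2) powr \<alpha>)" using y by (intro tail[rule_format]) simp
    finally show "prob {\<omega>\<in>space M. y \<le> enn2real (inverse (X \<omega>))} \<le> exp (- (c / 2 powr \<alpha>) * y powr \<alpha>)"
      using y0 by (simp add: powr_divide)
  qed
qed (use \<alpha> p in auto)

lemma poisson_integral_lower_tail:
  fixes \<psi> :: "'x \<Rightarrow> real" and N :: "'w \<Rightarrow> (real \<times> 'x) measure"
  assumes \<nu>: "sigma_finite_measure \<nu>" and PRM: "poisson_random_measure P (time_space_intensity \<nu>) N"
    and Oc: "Oc \<in> sets \<nu>" and \<psi>: "\<psi> \<in> borel_measurable (restrict_space \<nu> Oc)" and t: "0 \<le> t"
    and level: "ennreal (c * l powr \<alpha>) \<le> emeasure \<nu> {u\<in>Oc. 1/l \<le> \<psi> u}"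
  shows "measure P {\<omega>\<in>space P.
      (\<integral>\<^sup>+ z. indicator ({0..t} \<times> Oc) z * ennreal (\<psi> (snd z)) \<partial>N \<omega>) < ennreal (1/l)}
    \<le> exp (- (t*c) * l powr \<alpha>)"
proof -
  define S where "S = {u\<in>Oc. 1/l \<le> \<psi> u}"
  have S: "S \<in> sets \<nu>" unfolding S_def using Oc \<psi> by (rule sets_restrict_level_set)
  have "ennreal (t*c * l powr \<alpha>) = ennreal t * ennreal (c * l powr \<alpha>)"
    using t by (simp add: ennreal_mult' mult.assoc)
  also have "\<dots> \<le> ennreal t * emeasure \<nu> S" using level by (simp add: S_def mult_left_mono)
  also have "\<dots> = emeasure (time_space_intensity \<nu>) ({0..t} \<times> S)"
    using emeasure_time_space_intensity_Times[OF \<nu> t S] by simp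
  finally have "measure P {\<omega>\<in>space P.
      (\<integral>\<^sup>+ z. indicator ({0..t} \<times> Oc) z * ennreal (\<psi> (snd z)) \<partial>N \<omega>) < ennreal (1/l)}
    \<le> exp (- (t*c * l powr \<alpha>))"
    using S by (intro poisson_random_measure_prob_nn_integral_less_le[OF PRM sets_time_space_intensity_Times])
      (auto simp: S_def indicator_def ennreal_leI)
  then show ?thesis by simp
qed

theorem mainTheorem19:
  fixes P :: "'w measure" and \<nu> :: "'x measure"
    and N :: "'w \<Rightarrow> (real \<times> 'x) measure"
    and Ocal :: "'x set" and \<psi> :: "'x \<Rightarrow> real"
  assumes sigma_fin: "sigma_finite_measure \<nu>"
    and PRM: "poisson_random_measure P (time_space_intensity \<nu>) N"
    and O_meas: "Ocal \<in> sets \<nu>"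
    and O_inf: "emeasure \<nu> Ocal = \<infinity>"
    and \<psi>_meas: "\<psi> \<in> borel_measurable (restrict_space \<nu> Ocal)"
    and \<psi>_pos: "\<forall>u\<in>Ocal. 0 < \<psi> u"
    and lim: "\<exists>\<alpha>::real. 0 < \<alpha> \<and> \<alpha> < 1 \<and> (\<exists>r1::real. r1 < 0 \<and>
        (\<forall>\<^sub>F l in at_top. set_integrable \<nu> Ocal (\<lambda>u. exp (- l * \<psi> u) - 1)) \<and>
        ((\<lambda>l. (LINT u:Ocal|\<nu>. exp (- l * \<psi> u) - 1) / l powr \<alpha>) \<longlongrightarrow> r1) at_top)"
    and t_pos: "0 < (t::real)"
  shows "\<forall>p::real. 1 \<le> p \<longrightarrow>
      (let X = (\<lambda>\<omega>. \<integral>\<^sup>+ z. indicator ({0..t} \<times> Ocal) z * ennreal (\<psi> (snd z)) \<partial>(N \<omega>))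
       in (\<lambda>\<omega>. enn2real (inverse (X \<omega>))) \<in> borel_measurable P \<and>
          (AE \<omega> in P. inverse (X \<omega>) < \<infinity>) \<and>
          integrable P (\<lambda>\<omega>. enn2real (inverse (X \<omega>)) powr p))"
proof -
  interpret prob_space P using PRM by (simp add: poisson_random_measure_def)
  define f where "f z = indicator ({0..t} \<times> Ocal) z * ennreal (\<psi> (snd z))" for z
  define X where "X \<omega> = (\<integral>\<^sup>+ z. f z \<partial>N \<omega>)" for \<omega>
  have f: "f \<in> borel_measurable (time_space_intensity \<nu>)"
    unfolding f_def using O_meas \<psi>_meas by (rule borel_measurable_time_space_integrand)
  have X: "X \<in> borel_measurable P"
    unfolding X_def using PRM f
    by (intro measurable_nn_integral_random_measure) (auto simp: poisson_random_measure_def)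
  obtain \<alpha> r1 where \<alpha>: "0 < \<alpha>" "\<alpha> < 1" and r1: "r1 < 0"
    and int: "\<forall>\<^sub>F l in at_top. set_integrable \<nu> Ocal (\<lambda>u. exp (- l * \<psi> u) - 1)"
    and Laplace: "((\<lambda>l. (LINT u:Ocal|\<nu>. exp (- l * \<psi> u) - 1) / l powr \<alpha>) \<longlongrightarrow> r1) at_top"
    using lim by blast
  obtain c L0 where c: "0 < c" and L0: "0 < L0"
    and level: "\<forall>l\<ge>L0. ennreal (c * l powr \<alpha>) \<le> emeasure \<nu> {u\<in>Ocal. 1/l \<le> \<psi> u}"
    using level_set_measure_ge_powr[OF O_meas \<psi>_meas _ \<alpha> r1 int Laplace] \<psi>_pos
    by (metis less_le_not_le)
  have "\<forall>l\<ge>L0. prob {\<omega>\<in>space P. X \<omega> < ennreal (1/l)} \<le> exp (- (t*c) * l powr \<alpha>)"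
    using level t_pos unfolding X_def f_def
    by (intro allI impI poisson_integral_lower_tail[OF sigma_fin PRM O_meas \<psi>_meas]) auto
  then have moments: "integrable P (\<lambda>\<omega>. enn2real (inverse (X \<omega>)) powr p)" if "1 \<le> p" for p
    using c t_pos that by (intro integrable_inverse_powr_of_lower_tail[OF X _ \<alpha>(1) _ _ L0]) auto
  have "AE \<omega> in P. X \<omega> \<noteq> 0"
    unfolding X_def using \<psi>_pos O_inf t_pos
    by (intro poisson_random_measure_AE_nn_integral_nonzero[OF PRM f
          sets_time_space_intensity_Times[OF O_meas, of t]])
      (auto simp: f_def emeasure_time_space_intensity_Times[OF sigma_fin _ O_meas] ennreal_mult_top)
  then have "AE \<omega> in P. inverse (X \<omega>) < \<infinity>"
    by eventually_elim (simp add: less_top[symmetric])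
  moreover have "(\<lambda>\<omega>. enn2real (inverse (X \<omega>))) \<in> borel_measurable P" using X by measurable
  ultimately show ?thesis
    using moments unfolding f_def[abs_def, symmetric] X_def[abs_def, symmetric] Let_def by blast
qed

end
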